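(* Let $M=\frac{1}{3^{2/3}-2}$. Let the open intervals $J_n^k\subset[0,M]$ ($n\ge 1$, $1\le k\le 2^{n-1}$) be constructed as follows: $J_1^1$ is the open interval of length $3^{-2/3}$ centered at the midpoint of $[0,M]$; for $n\ge 2$, the intervals $J_n^1,\dots,J_n^{2^{n-1}}$ are the open intervals of length $(3^{2/3})^{-n}$ centered at the midpoints of the $2^{n-1}$ connected components of $[0,M]\setminus(J_1\cup\dots\cup J_{n-1})$, where $J_m=\bigcup_{k=1}^{2^{m-1}}J_m^k$. Let $A=[0,M]\setminus\bigcup_{n\ge1}J_n$. Define $g:[0,M]\to\mathbb{R}$ by $g=0$ on $A$ and $g(x)=\frac{4}{\mathcal{L}(J_n^k)^{1/2}}\mathrm{dist}(x,\partial J_n^k)$ for $x\in J_n^k$, define $f(x)=\int_0^x g(t)\,dt$ for $x\in[0,M]$, and define $F:[0,M]^2\to[0,2]$ by $F(x,y)=f(x)+f(y)$. Then $F$ is a $C^{1,\frac12}$ function (i.e. $C^1$ with $\tfrac12$-Hölder continuous derivatives) and every $t\in[0,2]$ is a critical value of $F$, i.e. there exists $(x,y)\in[0,M]^2$ with $F(x,y)=t$ and $\nabla F(x,y)=(0,0)$.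
   Context: $\mathcal{L}$ denotes Lebesgue measure (length); $\partial J$ is the set of endpoints of an interval $J$. *)

theory Defs
  imports "HOL-Analysis.Analysis"
begin

definition lam :: real where "lam = 3 powr (2/3)"
definition M :: real where "M = 1 / (lam - 2)"

definition intervals_after :: "real set \<Rightarrow> nat \<Rightarrow> real set set" where
  "intervals_after R n =
     (\<lambda>C. ball ((Inf C + Sup C) / 2) (1 / (2 * lam ^ n))) ` components ({0..M} - R)"

fun removed :: "nat \<Rightarrow> real set" where
  "removed 0 = {}"
| "removed (Suc n) = removed n \<union> \<Union>(intervals_after (removed n) (Suc n))"

definition Jfam :: "nat \<Rightarrow> real set set" where
  "Jfam n = intervals_after (removed (n - 1)) n"

definition allJ :: "real set set" where
  "allJ = (\<Union>n\<in>{1..}. Jfam n)"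

definition Aset :: "real set" where
  "Aset = {0..M} - \<Union>allJ"

definition g :: "real \<Rightarrow> real" where
  "g x = (if \<exists>J\<in>allJ. x \<in> J
          then (let J = (SOME J. J \<in> allJ \<and> x \<in> J)
                in 4 / sqrt (measure lebesgue J) * infdist x (frontier J))
          else 0)"

definition f :: "real \<Rightarrow> real" where
  "f x = integral {0..x} g"

definition F :: "real \<times> real \<Rightarrow> real" where
  "F p = f (fst p) + f (snd p)"

end

theory Submission
  imports Defs
begin

text \<open>
  Because lam^3 = 9, after n steps of the construction there remain 2^n closed segments of
  length M / lam^n, and the tent g on an interval removed at step n + 1 has integral 3^-(n+1).
  Splitting a level-n segment into its two subsegments and the gap between them, and using the
  crude bound g <= 2 lam^(-n/2) on the segment, squeezes the increment of f across it to
  exactly 3^-n. So f maps the left endpoints of level N onto the ternary fractions with N digits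
  in {0, 2}, and the sums f a + f b are (2 * 3^-N)-dense in [0, 2]. All endpoints lie in the
  compact set A, on which grad F = (g, g) vanishes; hence F(A x A) contains [0, 2]. Finally, a
  tent of slope 4 / sqrt |J| and height 2 sqrt |J| is 1/2-Hoelder with constant 4, and so is g
  because the intervals J are pairwise disjoint.
\<close>

lemma components_of_disjoint_closed_family:
  fixes \<U> :: "'a::topological_space set set"
  assumes fin: "finite \<U>"
    and sets: "\<And>C. C \<in> \<U> \<Longrightarrow> closed C \<and> connected C \<and> C \<noteq> {}"
    and disj: "pairwise disjnt \<U>"
  shows "components (\<Union>\<U>) = \<U>"
proof -
  have comp: "C \<in> components (\<Union>\<U>)" if C: "C \<in> \<U>" for C
    unfolding in_components_maximal
  proof (intro conjI allI impI)
    show "C \<noteq> {}" "connected C" using sets[OF C] by auto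
    show "C \<subseteq> \<Union>\<U>" using C by blast
    fix D assume D: "D \<noteq> {} \<and> C \<subseteq> D \<and> D \<subseteq> \<Union>\<U> \<and> connected D"
    define E where "E = \<Union>(\<U> - {C})"
    have "closed E" unfolding E_def using fin sets by (intro closed_Union) auto
    moreover have "C \<inter> E \<inter> D = {}"
      using disj C unfolding E_def pairwise_def disjnt_def by blast
    moreover have "D \<subseteq> C \<union> E" using D unfolding E_def by blast
    ultimately have "C \<inter> D = {} \<or> E \<inter> D = {}"
      using D sets[OF C] by (intro connected_closedD) auto
    then show "D = C" using D sets[OF C] \<open>D \<subseteq> C \<union> E\<close> by blast
  qed
  have "K \<in> \<U>" if K: "K \<in> components (\<Union>\<U>)" for K
  proof -
    obtain x where "x \<in> K" using K in_components_nonempty by blast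
    then obtain C where "C \<in> \<U>" "x \<in> C" using K in_components_subset by blast
    then show ?thesis using components_eq[OF K comp] \<open>x \<in> K\<close> by blast
  qed
  then show ?thesis using comp by blast
qed

lemma components_of_separated_intervals:
  fixes Q :: "real set"
  assumes "finite Q" "0 \<le> l" and sep: "\<And>a b. a \<in> Q \<Longrightarrow> b \<in> Q \<Longrightarrow> a < b \<Longrightarrow> a + l < b"
  shows "components (\<Union>a\<in>Q. {a..a + l}) = (\<lambda>a. {a..a + l}) ` Q"
proof (rule components_of_disjoint_closed_family)
  show "pairwise disjnt ((\<lambda>a. {a..a + l}) ` Q)"
  proof (rule pairwise_imageI)
    fix a b assume "a \<in> Q" "b \<in> Q" "a \<noteq> b"
    then show "disjnt {a..a + l} {b..b + l}"
      using sep[of a b] sep[of b a] by (cases a b rule: linorder_cases) (auto simp: disjnt_def)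
  qed
qed (use assms in auto)

lemma measure_lebesgue_ball_real:
  "0 \<le> r \<Longrightarrow> measure lebesgue (ball (c::real) r) = 2 * r"
  unfolding ball_eq_greaterThanLessThan by (subst measure_completion) auto

lemma in_ball_real_iff: "x \<in> ball c r \<longleftrightarrow> \<bar>x - c\<bar> < (r::real)"
  by (simp add: dist_real_def abs_minus_commute)

lemma infdist_frontier_ball_real:
  assumes "x \<in> ball (c::real) r"
  shows "infdist x (frontier (ball c r)) = r - \<bar>x - c\<bar>"
proof -
  have x: "\<bar>x - c\<bar> < r" using assms unfolding in_ball_real_iff .
  then have "frontier (ball c r) = {c - r, c + r}"
    by (auto simp: sphere_def dist_real_def)
  then have "infdist x (frontier (ball c r)) = min \<bar>x - (c - r)\<bar> \<bar>x - (c + r)\<bar>"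
    by (simp add: infdist_def cInf_insert inf_min dist_real_def)
  also have "\<dots> = r - \<bar>x - c\<bar>"
    using x by linarith
  finally show ?thesis .
qed

lemma continuous_on_if_sqrt_holder:
  fixes h :: "real \<Rightarrow> real"
  assumes holder: "\<And>x y. \<bar>h x - h y\<bar> \<le> C * sqrt \<bar>x - y\<bar>"
  shows "continuous_on S h"
proof (rule continuous_at_imp_continuous_on, intro ballI)
  fix x
  have "((\<lambda>y. C * sqrt \<bar>y - x\<bar>) \<longlongrightarrow> 0) (at x)"
    by (auto intro!: tendsto_eq_intros)
  then have "((\<lambda>y. h y - h x) \<longlongrightarrow> 0) (at x)"
    by (rule Lim_null_comparison[rotated]) (simp add: holder)
  then show "isCont h x"
    unfolding isCont_def by (rule LIM_zero_cancel)
qed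

lemma sqrt_holder_pair:
  fixes h :: "real \<Rightarrow> real"
  assumes holder: "\<And>x y. \<bar>h x - h y\<bar> \<le> C * sqrt \<bar>x - y\<bar>"
  shows "norm ((h (fst p), h (snd p)) - (h (fst q), h (snd q))) \<le> 2 * C * dist p q powr (1/2)"
proof -
  have "\<bar>h 1 - h 0\<bar> \<le> C" using holder[of 1 0] by simp
  then have "0 \<le> C" by linarith
  have "norm ((h (fst p), h (snd p)) - (h (fst q), h (snd q)))
          \<le> \<bar>h (fst p) - h (fst q)\<bar> + \<bar>h (snd p) - h (snd q)\<bar>"
    using norm_Pair_le[of "h (fst p) - h (fst q)" "h (snd p) - h (snd q)"] by simp
  also have "\<dots> \<le> C * sqrt \<bar>fst p - fst q\<bar> + C * sqrt \<bar>snd p - snd q\<bar>"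
    by (intro add_mono holder)
  also have "\<dots> \<le> C * sqrt (dist p q) + C * sqrt (dist p q)"
    using dist_fst_le[of p q] dist_snd_le[of p q] \<open>0 \<le> C\<close>
    by (intro add_mono mult_left_mono real_sqrt_le_mono) (auto simp: dist_real_def)
  also have "\<dots> = 2 * C * dist p q powr (1/2)"
    by (simp add: powr_half_sqrt)
  finally show ?thesis .
qed

lemma has_derivative_sum_fst_snd:
  assumes "(u has_real_derivative u') (at (fst p) within S)"
    and "(v has_real_derivative v') (at (snd p) within T)"
  shows "((\<lambda>q. u (fst q) + v (snd q)) has_derivative (\<lambda>h. (u', v') \<bullet> h)) (at p within S \<times> T)"
proof -
  have "(u has_derivative (*) u') (at (fst p) within fst ` (S \<times> T))"
    using assms(1) unfolding has_field_derivative_def by (rule has_derivative_subset) auto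
  then have du: "((\<lambda>q. u (fst q)) has_derivative (\<lambda>h. u' * fst h)) (at p within S \<times> T)"
    by (rule has_derivative_in_compose[OF has_derivative_fst[OF has_derivative_ident]])
  have "(v has_derivative (*) v') (at (snd p) within snd ` (S \<times> T))"
    using assms(2) unfolding has_field_derivative_def by (rule has_derivative_subset) auto
  then have dv: "((\<lambda>q. v (snd q)) has_derivative (\<lambda>h. v' * snd h)) (at p within S \<times> T)"
    by (rule has_derivative_in_compose[OF has_derivative_snd[OF has_derivative_ident]])
  show ?thesis
    using has_derivative_add[OF du dv] by (simp add: inner_prod_def)
qed

section \<open>Tent functions\<close>

definition tent :: "real \<Rightarrow> real \<Rightarrow> real \<Rightarrow> real" where
  "tent c r x = 4 / sqrt (2 * r) * (r - \<bar>x - c\<bar>)"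

lemma tent_le:
  assumes "x \<in> ball c r"
  shows "tent c r x \<le> 2 * sqrt (2 * r)"
proof -
  define s where "s = sqrt (2 * r)"
  have r: "0 < r" using assms unfolding in_ball_real_iff by linarith
  have s: "0 < s" "s * s = 2 * r" using r by (auto simp: s_def)
  have "tent c r x \<le> 4 / s * r"
    unfolding tent_def s_def[symmetric] using s(1) by (intro mult_left_mono) auto
  also have "\<dots> = 2 * s" using s by (simp add: field_simps)
  finally show ?thesis unfolding s_def .
qed

lemma tent_slope_le_sqrt:
  fixes D d r :: real
  assumes "0 \<le> D" "D \<le> d" "D \<le> r"
  shows "4 / sqrt (2 * r) * D \<le> 4 * sqrt d"
proof (cases "D = 0")
  case False
  define s where "s = sqrt (2 * r)"
  have s: "0 < s" "s * s = 2 * r" using assms False by (auto simp: s_def)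
  have "D \<le> sqrt d * s"
  proof (cases "d \<le> s * s")
    case True
    then have "sqrt d \<le> sqrt (s * s)" by (rule real_sqrt_le_mono)
    then have "sqrt d \<le> s" using s(1) by simp
    have "D \<le> sqrt d * sqrt d" using assms by simp
    also have "\<dots> \<le> sqrt d * s" using \<open>sqrt d \<le> s\<close> assms by (intro mult_left_mono) auto
    finally show ?thesis .
  next
    case False
    then have "s \<le> sqrt d" by (intro real_le_rsqrt) (simp add: power2_eq_square)
    have "D \<le> s * s" using assms s by linarith
    also have "\<dots> \<le> sqrt d * s" using \<open>s \<le> sqrt d\<close> s(1) by (intro mult_right_mono) auto
    finally show ?thesis .
  qed
  then have "D / s \<le> sqrt d" using s(1) by (simp add: pos_divide_le_eq)
  then show ?thesis unfolding s_def[symmetric] by simp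
qed (use assms in simp)

lemma tent_le_sqrt_dist_outside:
  assumes "x \<in> ball c r" "y \<notin> ball c r"
  shows "tent c r x \<le> 4 * sqrt \<bar>x - y\<bar>"
proof -
  have x: "\<bar>x - c\<bar> < r" and y: "r \<le> \<bar>y - c\<bar>"
    using assms unfolding in_ball_real_iff by auto
  show ?thesis
    unfolding tent_def by (rule tent_slope_le_sqrt) (use x y in arith)+
qed

lemma tent_holder:
  assumes "x \<in> ball c r" "y \<in> ball c r"
  shows "\<bar>tent c r x - tent c r y\<bar> \<le> 4 * sqrt \<bar>x - y\<bar>"
proof -
  have x: "\<bar>x - c\<bar> < r" and y: "\<bar>y - c\<bar> < r"
    using assms unfolding in_ball_real_iff by auto
  have "\<bar>tent c r x - tent c r y\<bar> = 4 / sqrt (2 * r) * \<bar>\<bar>y - c\<bar> - \<bar>x - c\<bar>\<bar>"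
    unfolding tent_def right_diff_distrib[symmetric] abs_mult using x by simp
  also have "\<dots> \<le> 4 * sqrt \<bar>x - y\<bar>"
    by (rule tent_slope_le_sqrt) (use x y in arith)+
  finally show ?thesis .
qed

lemma tent_has_integral:
  assumes r: "0 < r"
  shows "(tent c r has_integral sqrt (2 * r) ^ 3) {c - r..c + r}"
proof -
  define s where "s = sqrt (2 * r)"
  have s: "0 < s" "r = s * s / 2" using r by (auto simp: s_def)
  have "((\<lambda>x. 4 / s * (x - c + r)) has_integral
          (\<lambda>x. 2 / s * (x - c + r)\<^sup>2) c - (\<lambda>x. 2 / s * (x - c + r)\<^sup>2) (c - r)) {c - r..c}"
    by (rule fundamental_theorem_of_calculus)
       (use r s(1) in \<open>auto intro!: derivative_eq_intros
          simp: has_real_derivative_iff_has_vector_derivative[symmetric] field_simps\<close>)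
  then have "((\<lambda>x. 4 / s * (x - c + r)) has_integral 2 / s * r\<^sup>2) {c - r..c}" by simp
  then have left: "(tent c r has_integral 2 / s * r\<^sup>2) {c - r..c}"
    by (rule has_integral_spike_finite[where S = "{}", rotated 2]) (auto simp: tent_def s_def)
  have "((\<lambda>x. 4 / s * (c + r - x)) has_integral
          (\<lambda>x. - 2 / s * (c + r - x)\<^sup>2) (c + r) - (\<lambda>x. - 2 / s * (c + r - x)\<^sup>2) c) {c..c + r}"
    by (rule fundamental_theorem_of_calculus)
       (use r s(1) in \<open>auto intro!: derivative_eq_intros
          simp: has_real_derivative_iff_has_vector_derivative[symmetric] field_simps\<close>)
  then have "((\<lambda>x. 4 / s * (c + r - x)) has_integral 2 / s * r\<^sup>2) {c..c + r}" by simp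
  then have right: "(tent c r has_integral 2 / s * r\<^sup>2) {c..c + r}"
    by (rule has_integral_spike_finite[where S = "{}", rotated 2]) (auto simp: tent_def s_def)
  have "(tent c r has_integral 2 / s * r\<^sup>2 + 2 / s * r\<^sup>2) {c - r..c + r}"
    using has_integral_combine[OF _ _ left right] r by simp
  moreover have "2 / s * r\<^sup>2 + 2 / s * r\<^sup>2 = s ^ 3"
    using s by (simp add: field_simps power2_eq_square power3_eq_cube)
  ultimately show ?thesis by (simp add: s_def)
qed

section \<open>The segments of the construction\<close>

lemma lam_cube: "lam ^ 3 = 9"
proof -
  have "lam ^ 3 = 3 powr (2 / 3 * 3)"
    unfolding lam_def by (simp add: powr_powr powr_realpow[symmetric])
  also have "\<dots> = 9" by (simp add: powr_realpow[of 3 2, simplified])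
  finally show ?thesis .
qed

lemma lam_gt_2: "2 < lam"
proof (rule power_less_imp_less_base)
  show "2 ^ 3 < lam ^ 3" by (simp add: lam_cube)
  show "0 \<le> lam" by (simp add: lam_def)
qed

lemma M_pos: "0 < M"
  unfolding M_def using lam_gt_2 by simp

lemma M_mult_lam: "M * lam = 2 * M + 1"
  unfolding M_def using lam_gt_2 by (simp add: field_simps)

lemma sqrt_lam_power_cube: "sqrt (lam ^ k) ^ 3 = 3 ^ k"
proof -
  have "sqrt (lam ^ k) ^ 3 = sqrt ((lam ^ 3) ^ k)"
    by (simp add: real_sqrt_power power_mult[symmetric] mult.commute)
  also have "\<dots> = sqrt ((3 ^ k)\<^sup>2)"
    by (simp add: lam_cube power2_eq_square flip: power_mult_distrib)
  also have "\<dots> = 3 ^ k" by simp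
  finally show ?thesis .
qed

definition seg_len :: "nat \<Rightarrow> real" where
  "seg_len n = M / lam ^ n"

definition gap_rad :: "nat \<Rightarrow> real" where
  "gap_rad n = 1 / (2 * lam ^ n)"

lemma seg_len_pos: "0 < seg_len n"
  unfolding seg_len_def using M_pos lam_gt_2 by simp

lemma gap_rad_pos: "0 < gap_rad n"
  unfolding gap_rad_def using lam_gt_2 by simp

lemma seg_len_Suc: "seg_len n = 2 * seg_len (Suc n) + 2 * gap_rad (Suc n)"
proof -
  have "lam ^ n > 0" using lam_gt_2 by simp
  then have "2 * seg_len (Suc n) + 2 * gap_rad (Suc n) = (2 * M + 1) / (lam * lam ^ n)"
    unfolding seg_len_def gap_rad_def using lam_gt_2 by (simp add: field_simps)
  also have "\<dots> = seg_len n"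
    unfolding seg_len_def M_mult_lam[symmetric] using lam_gt_2 by simp
  finally show ?thesis ..
qed

text \<open>The interval of J_(n+1) cut out of the middle of the level-n segment starting at a
  (note the index shift).\<close>

definition gap :: "nat \<Rightarrow> real \<Rightarrow> real set" where
  "gap n a = ball (a + seg_len n / 2) (gap_rad (Suc n))"

lemma gap_eq: "gap n a = {a + seg_len (Suc n)<..<a + seg_len n - seg_len (Suc n)}"
proof -
  have "a + seg_len n / 2 - gap_rad (Suc n) = a + seg_len (Suc n)"
    and "a + seg_len n / 2 + gap_rad (Suc n) = a + seg_len n - seg_len (Suc n)"
    using seg_len_Suc[of n] by linarith+
  then show ?thesis unfolding gap_def ball_eq_greaterThanLessThan by (simp only:)
qed

text \<open>Left endpoints of the 2^n components of [0,M] - (J_1 \<union> ... \<union> J_n).\<close>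

fun seg_start :: "nat \<Rightarrow> real set" where
  "seg_start 0 = {0}"
| "seg_start (Suc n) = seg_start n \<union> (\<lambda>a. a + seg_len n - seg_len (Suc n)) ` seg_start n"

lemma finite_seg_start: "finite (seg_start n)"
  by (induction n) auto

lemma seg_start_mono: "m \<le> n \<Longrightarrow> seg_start m \<subseteq> seg_start n"
  by (induction n rule: dec_induct) auto

lemma seg_start_bounds: "a \<in> seg_start n \<Longrightarrow> 0 \<le> a \<and> a + seg_len n \<le> M"
proof (induction n arbitrary: a)
  case 0
  then show ?case using M_pos by (simp add: seg_len_def)
next
  case (Suc n)
  have "seg_len (Suc n) \<le> seg_len n - seg_len (Suc n)"
    using seg_len_Suc[of n] gap_rad_pos[of "Suc n"] by linarith
  moreover obtain a0 where "a0 \<in> seg_start n" "a = a0 \<or> a = a0 + seg_len n - seg_len (Suc n)"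
    using Suc.prems by auto
  ultimately show ?case using Suc.IH[of a0] seg_len_pos[of "Suc n"] by auto
qed

lemma seg_start_sep:
  "a \<in> seg_start n \<Longrightarrow> b \<in> seg_start n \<Longrightarrow> a < b \<Longrightarrow> a + seg_len n < b"
proof (induction n arbitrary: a b)
  case (Suc n)
  let ?l = "seg_len n" and ?l' = "seg_len (Suc n)"
  note l = seg_len_Suc[of n] gap_rad_pos[of "Suc n"] seg_len_pos[of "Suc n"]
  obtain a0 where a0: "a0 \<in> seg_start n" "a = a0 \<or> a = a0 + ?l - ?l'"
    using Suc.prems(1) by auto
  obtain b0 where b0: "b0 \<in> seg_start n" "b = b0 \<or> b = b0 + ?l - ?l'"
    using Suc.prems(2) by auto
  consider "a0 = b0" | "a0 + ?l < b0" | "b0 + ?l < a0"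
    using Suc.IH[OF a0(1) b0(1)] Suc.IH[OF b0(1) a0(1)] by (cases a0 b0 rule: linorder_cases) auto
  then show ?case
    using a0(2) b0(2) Suc.prems(3) l by cases linarith+
qed simp

lemma gap_subset_segment: "gap n a \<subseteq> {a..a + seg_len n}"
  unfolding gap_eq using seg_len_pos[of "Suc n"] by auto

lemma segment_minus_gap:
  "{a..a + seg_len n} - gap n a =
     {a..a + seg_len (Suc n)} \<union> {a + seg_len n - seg_len (Suc n)..a + seg_len n}"
  unfolding gap_eq using seg_len_Suc[of n] gap_rad_pos[of "Suc n"] seg_len_pos[of "Suc n"] by auto

lemma segments_disjoint:
  assumes "a \<in> seg_start n" "b \<in> seg_start n"
    and "x \<in> {a..a + seg_len n}" "x \<in> {b..b + seg_len n}"
  shows "a = b"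
  using seg_start_sep[OF assms(1,2)] seg_start_sep[OF assms(2,1)] assms(3,4)
  by (cases a b rule: linorder_cases) auto

lemma intervals_after_removed:
  assumes "{0..M} - removed n = (\<Union>a\<in>seg_start n. {a..a + seg_len n})"
  shows "intervals_after (removed n) (Suc n) = gap n ` seg_start n"
proof -
  have components: "components ({0..M} - removed n) = (\<lambda>a. {a..a + seg_len n}) ` seg_start n"
    unfolding assms
    by (rule components_of_separated_intervals)
       (use finite_seg_start seg_len_pos seg_start_sep in \<open>auto intro: less_imp_le\<close>)
  have midpoint: "(Inf {a..a + seg_len n} + Sup {a..a + seg_len n}) / 2 = a + seg_len n / 2" for a
    using seg_len_pos[of n] by simp
  show ?thesis
    unfolding intervals_after_def components image_image midpoint gap_def gap_rad_def ..
qed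

lemma complement_removed: "{0..M} - removed n = (\<Union>a\<in>seg_start n. {a..a + seg_len n})"
proof (induction n)
  case 0
  then show ?case by (simp add: seg_len_def)
next
  case (Suc n)
  let ?S = "seg_start n" and ?l = "seg_len n" and ?l' = "seg_len (Suc n)"
  have "{0..M} - removed (Suc n) = (\<Union>a\<in>?S. {a..a + ?l}) - (\<Union>b\<in>?S. gap n b)"
    using Suc.IH intervals_after_removed[OF Suc.IH] by auto
  also have "\<dots> = (\<Union>a\<in>?S. {a..a + ?l} - gap n a)"
    using segments_disjoint[of _ n] gap_subset_segment[of n] by blast
  also have "\<dots> = (\<Union>a\<in>?S. {a..a + ?l'} \<union> {a + ?l - ?l'..a + ?l})"
    by (simp only: segment_minus_gap)
  also have "\<dots> = (\<Union>a\<in>seg_start (Suc n). {a..a + ?l'})"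
    by auto
  finally show ?case .
qed

lemma Jfam_Suc: "Jfam (Suc n) = gap n ` seg_start n"
  unfolding Jfam_def using intervals_after_removed[OF complement_removed] by simp

lemma removed_Suc_gaps: "removed (Suc n) = removed n \<union> (\<Union>a\<in>seg_start n. gap n a)"
  using Jfam_Suc[of n] by (simp add: Jfam_def)

declare removed.simps(2) [simp del]

lemma removed_mono: "m \<le> n \<Longrightarrow> removed m \<subseteq> removed n"
  by (induction n rule: dec_induct) (auto simp: removed_Suc_gaps)

lemma allJ_eq: "allJ = (\<Union>n. gap n ` seg_start n)"
proof -
  have "{1..} = range Suc" by (auto simp: image_iff Suc_le_eq gr0_conv_Suc)
  then have "allJ = (\<Union>n. Jfam (Suc n))" unfolding allJ_def by (simp add: image_image)
  then show ?thesis by (simp add: Jfam_Suc)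
qed

lemma gap_subset_removed: "a \<in> seg_start n \<Longrightarrow> gap n a \<subseteq> removed (Suc n)"
  unfolding removed_Suc_gaps by blast

lemma gap_subset_complement_removed: "a \<in> seg_start n \<Longrightarrow> gap n a \<subseteq> {0..M} - removed n"
  unfolding complement_removed using gap_subset_segment by blast

lemma Union_allJ: "\<Union>allJ = (\<Union>n. removed n)"
proof
  show "\<Union>allJ \<subseteq> (\<Union>n. removed n)"
    unfolding allJ_eq using gap_subset_removed by blast
  have "removed n \<subseteq> \<Union>allJ" for n
    by (induction n) (auto simp: removed_Suc_gaps allJ_eq)
  then show "(\<Union>n. removed n) \<subseteq> \<Union>allJ" by blast
qed

lemma gaps_disjoint_levels:
  assumes "a \<in> seg_start n" "b \<in> seg_start m" "n < m"
  shows "gap n a \<inter> gap m b = {}"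
  using gap_subset_removed[OF assms(1)] removed_mono[of "Suc n" m] assms(3)
    gap_subset_complement_removed[OF assms(2)] by auto

lemma allJ_disjoint:
  assumes "J \<in> allJ" "J' \<in> allJ" "x \<in> J" "x \<in> J'"
  shows "J = J'"
proof -
  obtain n a m b where J: "a \<in> seg_start n" "J = gap n a" and J': "b \<in> seg_start m" "J' = gap m b"
    using assms(1,2) unfolding allJ_eq by blast
  have "n = m"
    using gaps_disjoint_levels[OF J(1) J'(1)] gaps_disjoint_levels[OF J'(1) J(1)] assms(3,4) J J'
    by (cases n m rule: linorder_cases) auto
  then show ?thesis
    using segments_disjoint[of a n b] gap_subset_segment assms(3,4) J J' by blast
qed

lemma allJ_ball: "J \<in> allJ \<Longrightarrow> \<exists>c r. J = ball c r"
  unfolding allJ_eq gap_def by blast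

section \<open>The functions g and f\<close>

lemma g_eq_tent:
  assumes "ball c r \<in> allJ" "x \<in> ball c r"
  shows "g x = tent c r x"
proof -
  have r: "0 \<le> r" using assms(2) zero_le_dist[of c x] unfolding mem_ball by linarith
  have "(SOME J. J \<in> allJ \<and> x \<in> J) = ball c r"
    by (rule some_equality) (use allJ_disjoint assms in blast)+
  then have "g x = 4 / sqrt (measure lebesgue (ball c r)) * infdist x (frontier (ball c r))"
    unfolding g_def Let_def using assms by auto
  also have "\<dots> = tent c r x"
    unfolding tent_def measure_lebesgue_ball_real[OF r] infdist_frontier_ball_real[OF assms(2)] ..
  finally show ?thesis .
qed

lemma g_eq_0: "x \<notin> \<Union>allJ \<Longrightarrow> g x = 0"
  unfolding g_def by auto

lemma g_nonneg: "0 \<le> g x"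
  unfolding g_def Let_def by (auto intro!: divide_nonneg_nonneg mult_nonneg_nonneg infdist_nonneg)

lemma g_le_sqrt_dist:
  assumes "\<And>J. J \<in> allJ \<Longrightarrow> x \<in> J \<Longrightarrow> y \<notin> J"
  shows "g x \<le> 4 * sqrt \<bar>x - y\<bar>"
proof (cases "x \<in> \<Union>allJ")
  case True
  then obtain c r where "ball c r \<in> allJ" "x \<in> ball c r"
    using allJ_ball by blast
  then show ?thesis
    using assms g_eq_tent tent_le_sqrt_dist_outside by metis
qed (simp add: g_eq_0)

lemma g_holder: "\<bar>g x - g y\<bar> \<le> 4 * sqrt \<bar>x - y\<bar>"
proof (cases "\<exists>J\<in>allJ. x \<in> J \<and> y \<in> J")
  case True
  then obtain c r where "ball c r \<in> allJ" "x \<in> ball c r" "y \<in> ball c r"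
    using allJ_ball by blast
  then show ?thesis
    using g_eq_tent tent_holder by metis
next
  case False
  then have "g x \<le> 4 * sqrt \<bar>x - y\<bar>" "g y \<le> 4 * sqrt \<bar>y - x\<bar>"
    by (blast intro: g_le_sqrt_dist)+
  then show ?thesis
    using g_nonneg[of x] g_nonneg[of y] by (simp add: abs_minus_commute abs_le_iff)
qed

lemma continuous_on_g: "continuous_on S g"
  using g_holder by (rule continuous_on_if_sqrt_holder)

lemma f_has_real_derivative:
  "x \<in> {0..M} \<Longrightarrow> (f has_real_derivative g x) (at x within {0..M})"
  unfolding has_real_derivative_iff_has_vector_derivative f_def[abs_def]
  by (rule integral_has_vector_derivative) (rule continuous_on_g)

lemma f_diff_eq_integral: "0 \<le> x \<Longrightarrow> x \<le> y \<Longrightarrow> f y - f x = integral {x..y} g"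
  unfolding f_def
  using Henstock_Kurzweil_Integration.integral_combine[of 0 x y g]
    integrable_continuous_real[OF continuous_on_g]
  by simp

section \<open>Increments of f across segments\<close>

lemma g_has_integral_gap:
  assumes a: "a \<in> seg_start n"
  shows "(g has_integral 1 / 3 ^ Suc n) {a + seg_len (Suc n)..a + seg_len n - seg_len (Suc n)}"
proof -
  define c r where "c = a + seg_len n / 2" and "r = gap_rad (Suc n)"
  have J: "ball c r \<in> allJ" unfolding allJ_eq c_def r_def gap_def[symmetric] using a by blast
  have ends: "c - r = a + seg_len (Suc n)" "c + r = a + seg_len n - seg_len (Suc n)"
    unfolding c_def r_def using seg_len_Suc[of n] by linarith+
  have "(g has_integral sqrt (2 * r) ^ 3) {c - r..c + r}"
    by (rule has_integral_spike_finite[where S = "{c - r, c + r}", OF _ _ tent_has_integral])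
       (use gap_rad_pos J in \<open>auto simp: r_def dist_real_def abs_less_iff intro!: g_eq_tent\<close>)
  moreover have "sqrt (2 * r) ^ 3 = 1 / 3 ^ Suc n"
    unfolding r_def gap_rad_def
    using sqrt_lam_power_cube[of "Suc n"]
    by (simp add: real_sqrt_divide power_divide del: power_Suc)
  ultimately show ?thesis unfolding ends by simp
qed

lemma f_gap_increment:
  assumes "a \<in> seg_start n"
  shows "f (a + seg_len n - seg_len (Suc n)) - f (a + seg_len (Suc n)) = 1 / 3 ^ Suc n"
proof -
  have "0 \<le> a + seg_len (Suc n)" "a + seg_len (Suc n) \<le> a + seg_len n - seg_len (Suc n)"
    using seg_start_bounds[OF assms] seg_len_pos[of "Suc n"] seg_len_Suc[of n]
      gap_rad_pos[of "Suc n"] by linarith+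
  then show ?thesis
    using f_diff_eq_integral integral_unique[OF g_has_integral_gap[OF assms]] by simp
qed

lemma g_le_on_segment:
  assumes a: "a \<in> seg_start n" and x: "x \<in> {a..a + seg_len n}"
  shows "g x \<le> 2 / sqrt (lam ^ n)"
proof (cases "x \<in> \<Union>allJ")
  case True
  then obtain m b where b: "b \<in> seg_start m" "x \<in> gap m b"
    unfolding allJ_eq by blast
  have "n \<le> m"
  proof (rule ccontr)
    assume "\<not> n \<le> m"
    then have "removed (Suc m) \<subseteq> removed n" by (intro removed_mono) simp
    moreover have "x \<notin> removed n" using a x complement_removed[of n] by blast
    ultimately show False using gap_subset_removed[OF b(1)] b(2) by blast
  qed
  then have "lam ^ n \<le> lam ^ Suc m"
    using lam_gt_2 by (intro power_increasing) auto
  then have "1 / lam ^ Suc m \<le> 1 / lam ^ n"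
    using lam_gt_2 by (intro divide_left_mono) auto
  have "g x = tent (b + seg_len m / 2) (gap_rad (Suc m)) x"
    using b by (intro g_eq_tent) (auto simp: allJ_eq gap_def)
  also have "\<dots> \<le> 2 * sqrt (2 * gap_rad (Suc m))"
    using b(2) unfolding gap_def by (rule tent_le)
  also have "\<dots> = 2 * sqrt (1 / lam ^ Suc m)"
    by (simp add: gap_rad_def)
  also have "\<dots> \<le> 2 * sqrt (1 / lam ^ n)"
    using \<open>1 / lam ^ Suc m \<le> 1 / lam ^ n\<close> by simp
  finally show ?thesis by (simp add: real_sqrt_divide)
next
  case False
  then show ?thesis using lam_gt_2 by (simp add: g_eq_0)
qed

lemma segment_increment_bounds:
  assumes a: "a \<in> seg_start n"
  shows "0 \<le> f (a + seg_len n) - f a" and "f (a + seg_len n) - f a \<le> 2 * M / 3 ^ n"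
proof -
  have eq: "f (a + seg_len n) - f a = integral {a..a + seg_len n} g"
    using f_diff_eq_integral seg_start_bounds[OF a] seg_len_pos[of n] by simp
  have int: "g integrable_on {a..a + seg_len n}"
    using integrable_continuous_real[OF continuous_on_g] .
  show "0 \<le> f (a + seg_len n) - f a"
    unfolding eq by (rule integral_nonneg[OF int]) (simp add: g_nonneg)
  define s where "s = sqrt (lam ^ n)"
  have s: "0 < s" "lam ^ n = s\<^sup>2" "s ^ 3 = 3 ^ n"
    unfolding s_def using lam_gt_2 sqrt_lam_power_cube by auto
  have "integral {a..a + seg_len n} g \<le> integral {a..a + seg_len n} (\<lambda>_. 2 / s)"
    unfolding s_def by (rule integral_le[OF int]) (auto intro: g_le_on_segment[OF a])
  also have "\<dots> = M / s\<^sup>2 * (2 / s)"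
    using seg_len_pos[of n] by (simp add: seg_len_def s(2))
  also have "\<dots> = 2 * M / 3 ^ n"
    unfolding s(3)[symmetric] using s(1)
    by (simp add: field_simps power2_eq_square power3_eq_cube)
  finally show "f (a + seg_len n) - f a \<le> 2 * M / 3 ^ n" unfolding eq .
qed

text \<open>The errors add up over the two subsegments, since the gap between them contributes
  exactly 3^-(n+1); at level n + k they are bounded crudely by segment_increment_bounds.\<close>

lemma segment_increment_error:
  "a \<in> seg_start n \<Longrightarrow> \<bar>f (a + seg_len n) - f a - 1 / 3 ^ n\<bar> \<le> (1 + 2 * M) * 2 ^ k / 3 ^ (n + k)"
proof (induction k arbitrary: n a)
  case 0
  have "(1 + 2 * M) * 2 ^ 0 / 3 ^ (n + 0) = 1 / 3 ^ n + 2 * M / 3 ^ n"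
    by (simp add: add_divide_distrib)
  moreover have "0 < 1 / (3::real) ^ n" "0 < 2 * M / 3 ^ n" using M_pos by auto
  ultimately show ?case
    using segment_increment_bounds[OF 0] unfolding abs_le_iff by linarith
next
  case (Suc k)
  let ?l = "seg_len n" and ?l' = "seg_len (Suc n)"
  let ?a' = "a + ?l - ?l'"
  let ?E = "(1 + 2 * M) * 2 ^ k / 3 ^ (Suc n + k)"
  have "f (a + ?l) - f a - 1 / 3 ^ n =
          (f (a + ?l') - f a - 1 / 3 ^ Suc n) + (f (?a' + ?l') - f ?a' - 1 / 3 ^ Suc n)"
    using f_gap_increment[OF Suc.prems] by simp
  also have "\<bar>\<dots>\<bar> \<le> ?E + ?E"
    using Suc.IH[of a "Suc n"] Suc.IH[of ?a' "Suc n"] Suc.prems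
    by (intro abs_triangle_ineq[THEN order_trans] add_mono) auto
  also have "?E + ?E = (1 + 2 * M) * 2 ^ Suc k / 3 ^ (n + Suc k)"
    by simp
  finally show ?case .
qed

lemma segment_increment: "a \<in> seg_start n \<Longrightarrow> f (a + seg_len n) - f a = 1 / 3 ^ n"
proof -
  assume a: "a \<in> seg_start n"
  have lim: "(\<lambda>k. (1 + 2 * M) / 3 ^ n * (2 / 3) ^ k) \<longlonglongrightarrow> (1 + 2 * M) / 3 ^ n * 0"
    by (intro tendsto_mult tendsto_const LIMSEQ_power_zero) simp
  have bound: "\<bar>f (a + seg_len n) - f a - 1 / 3 ^ n\<bar> \<le> (1 + 2 * M) / 3 ^ n * (2 / 3) ^ k" for k
    using segment_increment_error[OF a, of k] by (simp add: power_add power_divide)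
  have "\<bar>f (a + seg_len n) - f a - 1 / 3 ^ n\<bar> \<le> (1 + 2 * M) / 3 ^ n * 0"
    by (rule LIMSEQ_le_const[OF lim]) (use bound in blast)
  then show ?thesis by simp
qed

lemma f_zero: "f 0 = 0"
  by (simp add: f_def)

lemma f_right_subsegment_start:
  assumes "a \<in> seg_start n"
  shows "f (a + seg_len n - seg_len (Suc n)) = f a + 2 / 3 ^ Suc n"
proof -
  have "a + seg_len n - seg_len (Suc n) \<in> seg_start (Suc n)" using assms by simp
  from segment_increment[OF this] segment_increment[OF assms]
  show ?thesis by simp
qed

lemma pair_sums_dense:
  "t \<in> {0..2} \<Longrightarrow> \<exists>a\<in>seg_start N. \<exists>b\<in>seg_start N. f a + f b \<le> t \<and> t \<le> f a + f b + 2 / 3 ^ N"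
proof (induction N)
  case 0
  then show ?case by (simp add: f_zero)
next
  case (Suc N)
  then obtain a b where ab: "a \<in> seg_start N" "b \<in> seg_start N"
    "f a + f b \<le> t" "t \<le> f a + f b + 2 / 3 ^ N"
    by blast
  let ?a' = "a + seg_len N - seg_len (Suc N)" and ?b' = "b + seg_len N - seg_len (Suc N)"
  let ?d = "2 / 3 ^ Suc N :: real"
  have shifted: "f ?a' = f a + ?d" "f ?b' = f b + ?d" and "2 / 3 ^ N = 3 * ?d"
    using f_right_subsegment_start ab(1,2) by auto
  have starts: "a \<in> seg_start (Suc N)" "?a' \<in> seg_start (Suc N)"
    "b \<in> seg_start (Suc N)" "?b' \<in> seg_start (Suc N)"
    using ab(1,2) by auto
  show ?case
  proof (cases "t \<le> f a + f b + ?d")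
    case True
    then show ?thesis using starts ab(3) by blast
  next
    case False
    show ?thesis
    proof (cases "t \<le> f a + f b + 2 * ?d")
      case True
      then have "f ?a' + f b \<le> t \<and> t \<le> f ?a' + f b + ?d" using False shifted by linarith
      then show ?thesis using starts by blast
    next
      case False
      then have "f ?a' + f ?b' \<le> t \<and> t \<le> f ?a' + f ?b' + ?d"
        using shifted \<open>2 / 3 ^ N = 3 * ?d\<close> ab(4) by linarith
      then show ?thesis using starts by blast
    qed
  qed
qed

section \<open>Critical values\<close>

lemma F_has_derivative:
  "p \<in> {0..M} \<times> {0..M} \<Longrightarrow>
     (F has_derivative (\<lambda>h. (g (fst p), g (snd p)) \<bullet> h)) (at p within {0..M} \<times> {0..M})"
  unfolding F_def[abs_def]
  by (rule has_derivative_sum_fst_snd) (auto intro: f_has_real_derivative)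

lemma continuous_on_F: "continuous_on ({0..M} \<times> {0..M}) F"
proof -
  have f: "continuous_on {0..M} f"
    using f_has_real_derivative by (rule DERIV_continuous_on)
  have "continuous_on ({0..M} \<times> {0..M}) (\<lambda>p. f (fst p))"
    by (rule continuous_on_compose2[OF f continuous_on_fst[OF continuous_on_id]]) auto
  moreover have "continuous_on ({0..M} \<times> {0..M}) (\<lambda>p. f (snd p))"
    by (rule continuous_on_compose2[OF f continuous_on_snd[OF continuous_on_id]]) auto
  ultimately show ?thesis
    unfolding F_def[abs_def] by (rule continuous_on_add)
qed

lemma seg_start_subset_Aset: "seg_start n \<subseteq> Aset"
proof
  fix a assume a: "a \<in> seg_start n"
  have "a \<notin> removed m" for m
  proof -
    have "a \<in> seg_start (max n m)" using seg_start_mono[of n "max n m"] a by auto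
    then have "a \<notin> removed (max n m)"
      using complement_removed[of "max n m"] seg_len_pos[of "max n m"] by fastforce
    then show ?thesis using removed_mono[of m "max n m"] by auto
  qed
  moreover have "a \<in> {0..M}" using seg_start_bounds[OF a] seg_len_pos[of n] by auto
  ultimately show "a \<in> Aset" unfolding Aset_def Union_allJ by blast
qed

lemma compact_Aset: "compact Aset"
  unfolding Aset_def by (rule compact_diff) (auto intro!: open_Union dest: allJ_ball)

lemma Aset_subset: "Aset \<subseteq> {0..M}"
  unfolding Aset_def by blast

lemma g_vanishes_on_Aset: "x \<in> Aset \<Longrightarrow> g x = 0"
  unfolding Aset_def by (simp add: g_eq_0)

lemma F_image_Aset: "{0..2} \<subseteq> F ` (Aset \<times> Aset)"
proof
  fix t :: real assume t: "t \<in> {0..2}"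
  have "compact (F ` (Aset \<times> Aset))"
    using Aset_subset
    by (intro compact_continuous_image continuous_on_subset[OF continuous_on_F]
        compact_Times compact_Aset) auto
  moreover have "\<exists>y\<in>F ` (Aset \<times> Aset). dist y t < e" if "0 < e" for e
  proof -
    obtain N where "(1 / 3) ^ N < e / 2"
      using real_arch_pow_inv[of "e / 2" "1 / 3"] \<open>0 < e\<close> by auto
    then have N: "2 / 3 ^ N < e" by (simp add: power_divide)
    obtain a b where "a \<in> seg_start N" "b \<in> seg_start N"
      "f a + f b \<le> t" "t \<le> f a + f b + 2 / 3 ^ N"
      using pair_sums_dense[OF t] by blast
    moreover have "F (a, b) \<in> F ` (Aset \<times> Aset)"
      using seg_start_subset_Aset \<open>a \<in> seg_start N\<close> \<open>b \<in> seg_start N\<close> by blast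
    ultimately show ?thesis
      using N by (intro bexI[of _ "F (a, b)"]) (auto simp: dist_real_def F_def)
  qed
  ultimately show "t \<in> F ` (Aset \<times> Aset)"
    using closed_approachable compact_imp_closed by blast
qed

theorem mainTheorem3:
  shows "\<exists>DF :: real \<times> real \<Rightarrow> real \<times> real.
     (\<forall>p \<in> {0..M} \<times> {0..M}.
        (F has_derivative (\<lambda>h. DF p \<bullet> h)) (at p within {0..M} \<times> {0..M})) \<and>
     (\<exists>C. \<forall>p \<in> {0..M} \<times> {0..M}. \<forall>q \<in> {0..M} \<times> {0..M}.
        norm (DF p - DF q) \<le> C * dist p q powr (1/2)) \<and>
     (\<forall>t \<in> {0..2}. \<exists>p \<in> {0..M} \<times> {0..M}. F p = t \<and> DF p = 0)"
proof (intro exI conjI)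
  let ?DF = "\<lambda>p. (g (fst p), g (snd p))"
  show "\<forall>p \<in> {0..M} \<times> {0..M}. (F has_derivative (\<lambda>h. ?DF p \<bullet> h)) (at p within {0..M} \<times> {0..M})"
    using F_has_derivative by blast
  show "\<forall>p \<in> {0..M} \<times> {0..M}. \<forall>q \<in> {0..M} \<times> {0..M}.
      norm (?DF p - ?DF q) \<le> (2 * 4) * dist p q powr (1/2)"
    using sqrt_holder_pair[OF g_holder] by blast
  show "\<forall>t \<in> {0..2}. \<exists>p \<in> {0..M} \<times> {0..M}. F p = t \<and> ?DF p = 0"
  proof
    fix t :: real assume "t \<in> {0..2}"
    then obtain p where p: "p \<in> Aset \<times> Aset" "F p = t" using F_image_Aset by blast
    then have "?DF p = 0" using g_vanishes_on_Aset by (auto simp: zero_prod_def)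
    moreover have "p \<in> {0..M} \<times> {0..M}" using p(1) Aset_subset by auto
    ultimately show "\<exists>p \<in> {0..M} \<times> {0..M}. F p = t \<and> ?DF p = 0" using p(2) by blast
  qed
qed

end
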